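(* Let $\mathbf{k}$ be a field, $p\ge3$ and $q\ge1$ integers, $S=\mathbf{k}[e_1,\dots,e_{qp}]$, and in $S[t]$ let $f_0=t^q+e_pt^{q-1}+e_{2p}t^{q-2}+\cdots+e_{qp}$ and $f_k=e_kt^{q-1}+e_{p+k}t^{q-2}+\cdots+e_{(q-1)p+k}$ for $1\le k\le p-1$. Let $I=\langle f_0,\dots,f_{p-1}\rangle\cap S$, and let $J$ be the ideal of $S$ generated by the maximal ($(2q-1)\times(2q-1)$) minors of the matrix $A$ defined below. Then $\sqrt{J}\subseteq\sqrt{I}$. Moreover, when $p$ is prime and $\mathbf{k}=\mathbb{F}_p$, $\sqrt{J}\subseteq I$.
   Context: Set $e_0=1$. $A=[A_0\ A_1\ \cdots\ A_{p-1}]$ is the $(2q-1)\times((q-1)+(p-1)q)$ block matrix where $A_0$ is the $(2q-1)\times(q-1)$ matrix with $(a,c)$ entry $e_{(a-c)p}$ if $0\le a-c\le q$ and $0$ otherwise, and for $1\le i\le p-1$, $A_i$ is the $(2q-1)\times q$ matrix with $(a,c)$ entry $e_{(a-c)p+i}$ if $0\le a-c\le q-1$ and $0$ otherwise. (Thus $[A_0\ A_i]$ is the Sylvester matrix of $f_0$ and $f_i$.) *)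

theory Defs
  imports "HOL-Library.Poly_Mapping" "HOL-Computational_Algebra.Polynomial"
    "Jordan_Normal_Form.Determinant" "Jordan_Normal_Form.DL_Submatrix"
begin

text \<open>Multivariate polynomials over a field: the ambient ring
  (nat =>0 nat) =>0 'a in countably many variables; variable number j is e_j.
  The ring S = k[e_1,...,e_{qp}] is the subring of polynomials only involving
  the variables e_1, ..., e_{qp}.\<close>

type_synonym 'a mpol = "(nat \<Rightarrow>\<^sub>0 nat) \<Rightarrow>\<^sub>0 'a"

definition Var :: "nat \<Rightarrow> 'a::comm_ring_1 mpol" where
  "Var j = Poly_Mapping.single (Poly_Mapping.single j 1) 1"

definition mvars :: "'a::comm_ring_1 mpol \<Rightarrow> nat set" where
  "mvars f = \<Union> (Poly_Mapping.keys ` Poly_Mapping.keys f)"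

definition Sring :: "nat \<Rightarrow> 'a::comm_ring_1 mpol set" where
  "Sring n = {f. mvars f \<subseteq> {1..n}}"

definition Sring_t :: "nat \<Rightarrow> 'a::comm_ring_1 mpol poly set" where
  "Sring_t n = {P. \<forall>i. coeff P i \<in> Sring n}"

definition gen_ideal :: "'b::comm_ring_1 set \<Rightarrow> 'b set \<Rightarrow> 'b set" where
  "gen_ideal R G = {x. \<exists>c. (\<forall>g\<in>G. c g \<in> R) \<and> x = (\<Sum>g\<in>G. c g * g)}"

definition radical_in :: "'b::comm_ring_1 set \<Rightarrow> 'b set \<Rightarrow> 'b set" where
  "radical_in R X = {x\<in>R. \<exists>m. x ^ m \<in> X}"

definition e :: "nat \<Rightarrow> 'a::comm_ring_1 mpol" where
  "e j = (if j = 0 then 1 else Var j)"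

definition f0 :: "nat \<Rightarrow> nat \<Rightarrow> 'a::comm_ring_1 mpol poly" where
  "f0 p q = monom 1 q + (\<Sum>j=1..q. monom (e (j*p)) (q - j))"

definition fk :: "nat \<Rightarrow> nat \<Rightarrow> nat \<Rightarrow> 'a::comm_ring_1 mpol poly" where
  "fk p q k = (\<Sum>j=0..<q. monom (e (j*p + k)) (q - 1 - j))"

definition fgen :: "nat \<Rightarrow> nat \<Rightarrow> nat \<Rightarrow> 'a::comm_ring_1 mpol poly" where
  "fgen p q k = (if k = 0 then f0 p q else fk p q k)"

text \<open>I = <f_0,...,f_{p-1}> \<inter> S (S embedded into S[t] as constants).\<close>
definition I_ideal :: "nat \<Rightarrow> nat \<Rightarrow> 'a::comm_ring_1 mpol set" where
  "I_ideal p q = {x \<in> Sring (q*p).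
     [:x:] \<in> gen_ideal (Sring_t (q*p)) (fgen p q ` {0..<p})}"

text \<open>Entries of A = [A_0 A_1 ... A_{p-1}]: row a < 2q-1, global column c'.
  Columns 0..q-2 form A_0; columns q-1+(i-1)q .. q-1+iq-1 form A_i.\<close>
definition A_entry :: "nat \<Rightarrow> nat \<Rightarrow> nat \<Rightarrow> nat \<Rightarrow> 'a::comm_ring_1 mpol" where
  "A_entry p q a c' =
     (if c' < q - 1 then
        (if c' \<le> a \<and> a - c' \<le> q then e ((a - c') * p) else 0)
      else
        (let i = (c' - (q - 1)) div q + 1; c = (c' - (q - 1)) mod q in
         if c \<le> a \<and> a - c \<le> q - 1 then e ((a - c) * p + i) else 0))"

definition A_mat :: "nat \<Rightarrow> nat \<Rightarrow> 'a::comm_ring_1 mpol mat" where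
  "A_mat p q = mat (2*q - 1) ((q - 1) + (p - 1) * q) (\<lambda>(a, c). A_entry p q a c)"

definition max_minors :: "nat \<Rightarrow> nat \<Rightarrow> 'a::comm_ring_1 mpol set" where
  "max_minors p q = {det (submatrix (A_mat p q) {0..<2*q-1} C) | C.
      C \<subseteq> {0..<(q - 1) + (p - 1) * q} \<and> card C = 2*q - 1}"

definition J_ideal :: "nat \<Rightarrow> nat \<Rightarrow> 'a::comm_ring_1 mpol set" where
  "J_ideal p q = gen_ideal (Sring (q*p)) (max_minors p q)"

end

theory Submission
  imports Defs
begin

(* The variables e_v with (q-1)p < v <= qp are the constant terms of f_0, ..., f_{p-1}:
   e_v occurs, linearly and with coefficient 1, in f_{v mod p} and in no other f_k.
   Substituting e_v |-> e_v - f_{v mod p}(t) for these variables therefore gives a ring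
   homomorphism Phi : S -> S[t] with Phi(x) = x modulo <f_0, ..., f_{p-1}> and with
   Phi(f_k)(t) = 0 for every k.  As [A_0 A_i] is a Sylvester matrix, the row vector
   (t^(2q-2), ..., t, 1) annihilates Phi(A), so every maximal minor of A lies in the kernel
   of Phi.  This kernel is radical because S[t] is a domain, and it is contained in I. *)

section \<open>Evaluation of multivariate polynomials\<close>

definition monom_eval :: "(nat \<Rightarrow> 'b::comm_semiring_1) \<Rightarrow> (nat \<Rightarrow>\<^sub>0 nat) \<Rightarrow> 'b" where
  "monom_eval g m = (\<Prod>v\<in>Poly_Mapping.keys m. g v ^ Poly_Mapping.lookup m v)"

definition mpoly_eval :: "('a::comm_ring_1 \<Rightarrow> 'b::comm_ring_1) \<Rightarrow> (nat \<Rightarrow> 'b) \<Rightarrow> 'a mpol \<Rightarrow> 'b" where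
  "mpoly_eval C g f = (\<Sum>m\<in>Poly_Mapping.keys f. C (Poly_Mapping.lookup f m) * monom_eval g m)"

lemma monom_eval_superset:
  assumes "finite K" "Poly_Mapping.keys m \<subseteq> K"
  shows "monom_eval g m = (\<Prod>v\<in>K. g v ^ Poly_Mapping.lookup m v)"
  unfolding monom_eval_def
  by (rule prod.mono_neutral_left) (use assms in \<open>auto simp: in_keys_iff\<close>)

lemma monom_eval_add: "monom_eval g (m + n) = monom_eval g m * monom_eval g n"
proof -
  let ?K = "Poly_Mapping.keys m \<union> Poly_Mapping.keys n"
  have "monom_eval g (m + n) = (\<Prod>v\<in>?K. g v ^ Poly_Mapping.lookup (m + n) v)"
    by (rule monom_eval_superset) (auto simp: keys_add)
  also have "\<dots> = (\<Prod>v\<in>?K. g v ^ Poly_Mapping.lookup m v) * (\<Prod>v\<in>?K. g v ^ Poly_Mapping.lookup n v)"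
    by (simp add: lookup_add power_add prod.distrib)
  also have "\<dots> = monom_eval g m * monom_eval g n"
    by (subst (1 2) monom_eval_superset[of ?K]) auto
  finally show ?thesis .
qed

lemma monom_eval_0 [simp]: "monom_eval g 0 = 1"
  by (simp add: monom_eval_def)

lemma monom_eval_single [simp]: "monom_eval g (Poly_Mapping.single v k) = g v ^ k"
  by (cases "k = 0") (simp_all add: monom_eval_def)

lemma mpoly_eval_0 [simp]: "mpoly_eval C g 0 = 0"
  by (simp add: mpoly_eval_def)

lemma poly_mapping_sum_monomials:
  "(f :: 'k \<Rightarrow>\<^sub>0 'v::comm_monoid_add) =
     (\<Sum>m\<in>Poly_Mapping.keys f. Poly_Mapping.single m (Poly_Mapping.lookup f m))"
proof (rule poly_mapping_eqI)
  fix k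
  show "Poly_Mapping.lookup f k =
      Poly_Mapping.lookup (\<Sum>m\<in>Poly_Mapping.keys f. Poly_Mapping.single m (Poly_Mapping.lookup f m)) k"
    by (cases "k \<in> Poly_Mapping.keys f")
       (auto simp: lookup_sum lookup_single in_keys_iff when_def sum.delta)
qed

context comm_ring_hom
begin

lemma mpoly_eval_superset:
  assumes "finite K" "Poly_Mapping.keys f \<subseteq> K"
  shows "mpoly_eval hom g f = (\<Sum>m\<in>K. hom (Poly_Mapping.lookup f m) * monom_eval g m)"
  unfolding mpoly_eval_def
  by (rule sum.mono_neutral_left) (use assms in \<open>auto simp: in_keys_iff\<close>)

lemma mpoly_eval_add: "mpoly_eval hom g (f + h) = mpoly_eval hom g f + mpoly_eval hom g h"
proof -
  let ?K = "Poly_Mapping.keys f \<union> Poly_Mapping.keys h"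
  have "mpoly_eval hom g (f + h) = (\<Sum>m\<in>?K. hom (Poly_Mapping.lookup (f + h) m) * monom_eval g m)"
    by (rule mpoly_eval_superset) (auto simp: keys_add)
  also have "\<dots> = (\<Sum>m\<in>?K. hom (Poly_Mapping.lookup f m) * monom_eval g m)
                  + (\<Sum>m\<in>?K. hom (Poly_Mapping.lookup h m) * monom_eval g m)"
    by (simp add: lookup_add hom_add distrib_right sum.distrib)
  also have "\<dots> = mpoly_eval hom g f + mpoly_eval hom g h"
    by (subst (1 2) mpoly_eval_superset[of ?K]) auto
  finally show ?thesis .
qed

lemma mpoly_eval_single:
  "mpoly_eval hom g (Poly_Mapping.single m c) = hom c * monom_eval g m"
  by (cases "c = 0") (simp_all add: mpoly_eval_def)

lemma mpoly_eval_sum: "mpoly_eval hom g (sum F S) = (\<Sum>x\<in>S. mpoly_eval hom g (F x))"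
  by (induct S rule: infinite_finite_induct) (simp_all add: mpoly_eval_add)

lemma mpoly_eval_mult: "mpoly_eval hom g (f * h) = mpoly_eval hom g f * mpoly_eval hom g h"
proof -
  have "f * h = (\<Sum>m\<in>Poly_Mapping.keys f. \<Sum>n\<in>Poly_Mapping.keys h.
      Poly_Mapping.single (m + n) (Poly_Mapping.lookup f m * Poly_Mapping.lookup h n))"
    by (subst (1) poly_mapping_sum_monomials[of f], subst (1) poly_mapping_sum_monomials[of h])
       (simp add: sum_product mult_single)
  then have "mpoly_eval hom g (f * h) = (\<Sum>m\<in>Poly_Mapping.keys f. \<Sum>n\<in>Poly_Mapping.keys h.
      (hom (Poly_Mapping.lookup f m) * monom_eval g m) * (hom (Poly_Mapping.lookup h n) * monom_eval g n))"
    by (simp add: mpoly_eval_sum mpoly_eval_single hom_mult monom_eval_add ac_simps)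
  also have "\<dots> = mpoly_eval hom g f * mpoly_eval hom g h"
    unfolding mpoly_eval_def by (simp add: sum_product)
  finally show ?thesis .
qed

lemma mpoly_eval_1: "mpoly_eval hom g 1 = 1"
  using mpoly_eval_single[of g 0 1] by simp

lemma comm_ring_hom_mpoly_eval: "comm_ring_hom (mpoly_eval hom g)"
  by unfold_locales (simp_all add: mpoly_eval_add mpoly_eval_mult mpoly_eval_1)

lemma mpoly_eval_Var: "mpoly_eval hom g (Var v) = g v"
  by (simp add: Var_def mpoly_eval_single)

end

lemma mpoly_eval_hom_comp:
  assumes "comm_ring_hom h"
  shows "h (mpoly_eval C g f) = mpoly_eval (h \<circ> C) (h \<circ> g) f"
proof -
  interpret comm_ring_hom h by fact
  show ?thesis
    by (simp add: mpoly_eval_def monom_eval_def hom_sum hom_mult hom_prod hom_power)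
qed

lemma Var_power: "(Var v :: 'a::comm_ring_1 mpol) ^ k = Poly_Mapping.single (Poly_Mapping.single v k) 1"
  by (induct k) (simp_all add: Var_def mult_single flip: single_add)

lemma prod_single_1:
  "(\<Prod>v\<in>S. Poly_Mapping.single (s v) (1::'a::comm_ring_1)) = Poly_Mapping.single (\<Sum>v\<in>S. s v) 1"
  by (induct S rule: infinite_finite_induct) (simp_all add: mult_single)

lemma monom_eval_Var: "monom_eval Var m = (Poly_Mapping.single m 1 :: 'a::comm_ring_1 mpol)"
  unfolding monom_eval_def Var_power prod_single_1
  by (subst (2) poly_mapping_sum_monomials[of m]) (rule refl)

lemma mpoly_eval_Var_self: "mpoly_eval (Poly_Mapping.single 0) Var f = (f :: 'a::comm_ring_1 mpol)"
proof -
  have "mpoly_eval (Poly_Mapping.single 0) Var f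
      = (\<Sum>m\<in>Poly_Mapping.keys f. Poly_Mapping.single m (Poly_Mapping.lookup f m))"
    unfolding mpoly_eval_def monom_eval_Var by (simp add: mult_single)
  then show ?thesis by (simp flip: poly_mapping_sum_monomials)
qed

lemma comm_ring_hom_const_poly: "comm_ring_hom (\<lambda>c::'a::comm_ring_1. [:c:])"
  by unfold_locales (simp_all add: one_pCons)

lemma mpoly_eval_const_poly:
  "mpoly_eval (\<lambda>c. [:Poly_Mapping.single 0 c:]) (\<lambda>v. [:Var v:]) f = [:(f :: 'a::comm_ring_1 mpol):]"
  using mpoly_eval_hom_comp[OF comm_ring_hom_const_poly, of "Poly_Mapping.single 0" Var f]
  by (simp add: mpoly_eval_Var_self o_def)

section \<open>Evaluation modulo an ideal\<close>

locale ideal_in =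
  fixes R K :: "'b::comm_ring_1 set"
  assumes R_mult: "a \<in> R \<Longrightarrow> b \<in> R \<Longrightarrow> a * b \<in> R"
    and R_one: "1 \<in> R"
    and K_add: "a \<in> K \<Longrightarrow> b \<in> K \<Longrightarrow> a + b \<in> K"
    and K_mult: "r \<in> R \<Longrightarrow> a \<in> K \<Longrightarrow> r * a \<in> K"
    and K_zero: "0 \<in> K"
begin

lemma sum_mem_K: "(\<And>x. x \<in> S \<Longrightarrow> F x \<in> K) \<Longrightarrow> sum F S \<in> K"
  by (induct S rule: infinite_finite_induct) (auto intro: K_add K_zero)

lemma prod_mem_R: "(\<And>x. x \<in> S \<Longrightarrow> F x \<in> R) \<Longrightarrow> prod F S \<in> R"
  by (induct S rule: infinite_finite_induct) (auto intro: R_mult R_one)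

lemma mult_diff_mem_K:
  assumes "a \<in> R" "b' \<in> R" "a - b \<in> K" "a' - b' \<in> K"
  shows "a * a' - b * b' \<in> K"
proof -
  have "a * a' - b * b' = a * (a' - b') + b' * (a - b)" by (simp add: algebra_simps)
  then show ?thesis using assms by (auto intro: K_add K_mult)
qed

lemma prod_diff_mem_K:
  assumes "\<And>x. x \<in> S \<Longrightarrow> F x \<in> R \<and> G x \<in> R \<and> F x - G x \<in> K"
  shows "prod F S - prod G S \<in> K"
  using assms
proof (induct S rule: infinite_finite_induct)
  case (insert x S)
  then show ?case by (auto intro: mult_diff_mem_K prod_mem_R)
qed (simp_all add: K_zero)

lemma power_mem_R: "a \<in> R \<Longrightarrow> a ^ n \<in> R"
  using prod_mem_R[of "{..<n}" "\<lambda>_. a"] by simp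

lemma power_diff_mem_K:
  assumes "a \<in> R" "b \<in> R" "a - b \<in> K"
  shows "a ^ n - b ^ n \<in> K"
  using prod_diff_mem_K[of "{..<n}" "\<lambda>_. a" "\<lambda>_. b"] assms by simp

lemma mpoly_eval_diff_mem_K:
  assumes C: "\<And>c. C c \<in> R"
    and g: "\<And>v. v \<in> mvars f \<Longrightarrow> g v \<in> R \<and> g' v \<in> R \<and> g v - g' v \<in> K"
  shows "mpoly_eval C g f - mpoly_eval C g' f \<in> K"
proof -
  have monom: "monom_eval g m - monom_eval g' m \<in> K" if m: "m \<in> Poly_Mapping.keys f" for m
  proof -
    have "v \<in> mvars f" if "v \<in> Poly_Mapping.keys m" for v
      using m that by (auto simp: mvars_def)
    then show ?thesis
      unfolding monom_eval_def by (intro prod_diff_mem_K conjI power_mem_R power_diff_mem_K) (auto dest: g)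
  qed
  have "mpoly_eval C g f - mpoly_eval C g' f =
      (\<Sum>m\<in>Poly_Mapping.keys f. C (Poly_Mapping.lookup f m) * (monom_eval g m - monom_eval g' m))"
    unfolding mpoly_eval_def by (simp add: sum_subtractf right_diff_distrib)
  also have "\<dots> \<in> K" by (intro sum_mem_K K_mult C monom)
  finally show ?thesis .
qed

end

lemma ideal_in_gen_ideal:
  assumes "\<And>a b. a \<in> R \<Longrightarrow> b \<in> R \<Longrightarrow> a + b \<in> R"
    and "\<And>a b. a \<in> R \<Longrightarrow> b \<in> R \<Longrightarrow> a * b \<in> R"
    and "0 \<in> R" "1 \<in> R"
  shows "ideal_in R (gen_ideal R G)"
proof
  fix a b assume "a \<in> gen_ideal R G" "b \<in> gen_ideal R G"
  then obtain c d where "\<forall>g\<in>G. c g \<in> R" "a = (\<Sum>g\<in>G. c g * g)"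
    and "\<forall>g\<in>G. d g \<in> R" "b = (\<Sum>g\<in>G. d g * g)"
    by (auto simp: gen_ideal_def)
  then show "a + b \<in> gen_ideal R G"
    unfolding gen_ideal_def using assms(1)
    by (auto intro!: exI[of _ "\<lambda>g. c g + d g"] simp: sum.distrib distrib_right)
next
  fix r a assume "r \<in> R" "a \<in> gen_ideal R G"
  then obtain c where "\<forall>g\<in>G. c g \<in> R" "a = (\<Sum>g\<in>G. c g * g)"
    by (auto simp: gen_ideal_def)
  then show "r * a \<in> gen_ideal R G"
    unfolding gen_ideal_def using assms(2) \<open>r \<in> R\<close>
    by (auto intro!: exI[of _ "\<lambda>g. r * c g"] simp: sum_distrib_left mult.assoc)
next
  show "0 \<in> gen_ideal R G"
    unfolding gen_ideal_def using assms(3) by (auto intro!: exI[of _ "\<lambda>g. 0"])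
qed (use assms in auto)

lemma generator_in_gen_ideal:
  assumes "finite G" "g \<in> G" "0 \<in> R" "1 \<in> R"
  shows "g \<in> gen_ideal R G"
proof -
  have "(\<Sum>h\<in>G. (if h = g then 1 else 0) * h) = (\<Sum>h\<in>G. if h = g then h else 0)"
    by (rule sum.cong) auto
  also have "\<dots> = g" using assms(1,2) by simp
  finally have "(\<Sum>h\<in>G. (if h = g then 1 else 0) * h) = g" .
  then show ?thesis
    unfolding gen_ideal_def using assms(3,4) by (auto intro!: exI[of _ "\<lambda>h. if h = g then 1 else 0"])
qed

section \<open>The rings S and S[t]\<close>

lemma mvars_add: "mvars (f + g) \<subseteq> mvars f \<union> mvars g"
  unfolding mvars_def using keys_add[of f g] by blast

lemma mvars_uminus: "mvars (- f) = mvars f"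
  unfolding mvars_def by (simp add: in_keys_iff)

lemma mvars_mult: "mvars (f * g) \<subseteq> mvars f \<union> mvars g"
proof
  fix v assume "v \<in> mvars (f * g)"
  then obtain m where m: "m \<in> Poly_Mapping.keys (f * g)" "v \<in> Poly_Mapping.keys m"
    by (auto simp: mvars_def)
  then obtain a b where "m = a + b" "a \<in> Poly_Mapping.keys f" "b \<in> Poly_Mapping.keys g"
    using keys_mult[of f g] by blast
  then show "v \<in> mvars f \<union> mvars g"
    using m(2) keys_add[of a b] by (auto simp: mvars_def)
qed

lemma Sring_add: "f \<in> Sring n \<Longrightarrow> g \<in> Sring n \<Longrightarrow> f + g \<in> Sring n"
  using mvars_add[of f g] by (auto simp: Sring_def)

lemma Sring_mult: "f \<in> Sring n \<Longrightarrow> g \<in> Sring n \<Longrightarrow> f * g \<in> Sring n"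
  using mvars_mult[of f g] by (auto simp: Sring_def)

lemma Sring_uminus: "f \<in> Sring n \<Longrightarrow> - f \<in> Sring n"
  by (simp add: Sring_def mvars_uminus)

lemma Sring_diff: "f \<in> Sring n \<Longrightarrow> g \<in> Sring n \<Longrightarrow> f - g \<in> Sring n"
  using Sring_add[of f n "- g"] Sring_uminus[of g n] by simp

lemma Sring_0 [simp]: "0 \<in> Sring n"
  by (simp add: Sring_def mvars_def)

lemma Sring_sum: "(\<And>x. x \<in> S \<Longrightarrow> F x \<in> Sring n) \<Longrightarrow> sum F S \<in> Sring n"
  by (induct S rule: infinite_finite_induct) (auto intro: Sring_add)

lemma Sring_single_0 [simp]: "Poly_Mapping.single 0 c \<in> Sring n"
  by (simp add: Sring_def mvars_def)

lemma Sring_e: "j \<le> n \<Longrightarrow> e j \<in> Sring n"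
  by (simp add: e_def Sring_def mvars_def Var_def)

lemma Sring_Var: "1 \<le> v \<Longrightarrow> v \<le> n \<Longrightarrow> Var v \<in> Sring n"
  using Sring_e[of v n] by (simp add: e_def)

lemma Sring_t_add: "P \<in> Sring_t n \<Longrightarrow> Q \<in> Sring_t n \<Longrightarrow> P + Q \<in> Sring_t n"
  by (auto simp: Sring_t_def intro: Sring_add)

lemma Sring_t_mult: "P \<in> Sring_t n \<Longrightarrow> Q \<in> Sring_t n \<Longrightarrow> P * Q \<in> Sring_t n"
  by (auto simp: Sring_t_def coeff_mult intro!: Sring_sum Sring_mult)

lemma Sring_t_diff: "P \<in> Sring_t n \<Longrightarrow> Q \<in> Sring_t n \<Longrightarrow> P - Q \<in> Sring_t n"
  by (auto simp: Sring_t_def intro: Sring_diff)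

lemma Sring_t_0 [simp]: "0 \<in> Sring_t n"
  and Sring_t_1 [simp]: "1 \<in> Sring_t n"
  by (simp_all add: Sring_t_def coeff_1 Sring_def mvars_def)

lemma Sring_t_monom: "c \<in> Sring n \<Longrightarrow> monom c i \<in> Sring_t n"
  by (simp add: Sring_t_def coeff_monom Sring_def mvars_def)

lemma Sring_t_const: "c \<in> Sring n \<Longrightarrow> [:c:] \<in> Sring_t n"
  using Sring_t_monom[of c n 0] by (simp add: monom_0)

lemma Sring_t_sum: "(\<And>x. x \<in> S \<Longrightarrow> F x \<in> Sring_t n) \<Longrightarrow> sum F S \<in> Sring_t n"
  by (induct S rule: infinite_finite_induct) (auto intro: Sring_t_add)

lemma ideal_in_Sring_t: "ideal_in (Sring_t n) (gen_ideal (Sring_t n) G)"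
  by (rule ideal_in_gen_ideal) (auto intro: Sring_t_add Sring_t_mult)

definition fgen_degree :: "nat \<Rightarrow> nat \<Rightarrow> nat" where
  "fgen_degree q k = (if k = 0 then q else q - 1)"

lemma fgen_eq_sum:
  assumes "q \<ge> 1"
  shows "fgen p q k = (\<Sum>j\<le>fgen_degree q k. monom (e (j * p + k)) (fgen_degree q k - j))"
proof (cases "k = 0")
  case True
  have "{..q} = insert 0 {1..q}" by auto
  then show ?thesis using True by (simp add: fgen_def f0_def fgen_degree_def e_def)
next
  case False
  have "{..q - 1} = {0..<q}" using assms by auto
  then show ?thesis using False by (simp add: fgen_def fk_def fgen_degree_def)
qed

lemma fgen_var_index:
  assumes "k < p" "q \<ge> 1" "j \<le> fgen_degree q k"
  shows "j * p + k \<le> q * p"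
    and "(q - 1) * p < j * p + k \<longleftrightarrow> j = fgen_degree q k"
proof -
  have qp: "(q - 1) * p + p = q * p" using assms(2) by (cases q) auto
  show "j * p + k \<le> q * p"
  proof (cases "k = 0")
    case True then show ?thesis using assms(3) by (simp add: fgen_degree_def)
  next
    case False
    then have "j * p \<le> (q - 1) * p" using assms(3) by (simp add: fgen_degree_def)
    then show ?thesis using qp assms(1) by linarith
  qed
  show "(q - 1) * p < j * p + k \<longleftrightarrow> j = fgen_degree q k"
  proof (cases "k = 0")
    case True
    have "(q - 1) * p < j * p \<longleftrightarrow> q - 1 < j" using assms(1) by simp
    then show ?thesis using True assms(2,3) by (auto simp: fgen_degree_def)
  next
    case False
    then have d: "fgen_degree q k = q - 1" by (simp add: fgen_degree_def)
    show ?thesis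
    proof (cases "j = q - 1")
      case True then show ?thesis using False d by simp
    next
      case False
      then have "Suc j * p \<le> (q - 1) * p" using assms(3) d by (intro mult_le_mono1) simp
      then show ?thesis using False assms(1) d by simp
    qed
  qed
qed

lemma fgen_in_Sring_t:
  assumes "k < p" "q \<ge> 1"
  shows "fgen p q k \<in> Sring_t (q * p)"
  unfolding fgen_eq_sum[OF assms(2)]
  by (intro Sring_t_sum Sring_t_monom Sring_e fgen_var_index[OF assms]) simp

section \<open>The substitution Phi\<close>

text \<open>For (q-1)p < v <= qp the variable e_v is the constant term of f_(v mod p).\<close>

definition fgen_of_var :: "nat \<Rightarrow> nat \<Rightarrow> nat \<Rightarrow> 'a::comm_ring_1 mpol poly" where
  "fgen_of_var p q v = (if (q - 1) * p < v \<and> v \<le> q * p then fgen p q (v mod p) else 0)"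

definition Phi :: "nat \<Rightarrow> nat \<Rightarrow> 'a::comm_ring_1 mpol \<Rightarrow> 'a mpol poly" where
  "Phi p q = mpoly_eval (\<lambda>c. [:Poly_Mapping.single 0 c:]) (\<lambda>v. [:Var v:] - fgen_of_var p q v)"

lemma comm_ring_hom_const_mpoly: "comm_ring_hom (\<lambda>c::'a::comm_ring_1. [:Poly_Mapping.single 0 c:])"
  by unfold_locales (simp_all add: single_add mult_single one_pCons mult.commute)

lemma comm_ring_hom_Phi: "comm_ring_hom (Phi p q)"
  unfolding Phi_def by (rule comm_ring_hom.comm_ring_hom_mpoly_eval[OF comm_ring_hom_const_mpoly])

lemma Phi_e: "Phi p q (e n) = [:e n:] - fgen_of_var p q n"
proof (cases "n = 0")
  case True
  then show ?thesis
    by (simp add: e_def fgen_of_var_def Phi_def comm_ring_hom.mpoly_eval_1[OF comm_ring_hom_const_mpoly])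
next
  case False
  then show ?thesis
    by (simp add: e_def Phi_def comm_ring_hom.mpoly_eval_Var[OF comm_ring_hom_const_mpoly])
qed

lemma Phi_0 [simp]: "Phi p q 0 = 0"
  by (simp add: Phi_def)

lemma Phi_zero_imp_in_I_ideal:
  fixes x :: "'a::comm_ring_1 mpol"
  assumes x: "x \<in> Sring (q * p)" and Phi: "Phi p q x = 0" and p: "p \<ge> 1" and q: "q \<ge> 1"
  shows "x \<in> I_ideal p q"
proof -
  let ?K = "gen_ideal (Sring_t (q * p)) (fgen p q ` {0..<p}) :: 'a mpol poly set"
  interpret ideal_in "Sring_t (q * p)" ?K by (rule ideal_in_Sring_t)
  have "[:x:] - Phi p q x \<in> ?K"
    unfolding Phi_def mpoly_eval_const_poly[of x, symmetric]
  proof (rule mpoly_eval_diff_mem_K)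
    fix v assume "v \<in> mvars x"
    then have v: "1 \<le> v" "v \<le> q * p" using x by (auto simp: Sring_def)
    have Var: "[:Var v :: 'a mpol:] \<in> Sring_t (q * p)" by (intro Sring_t_const Sring_Var v)
    have k: "v mod p < p" using p by simp
    have "(fgen p q (v mod p) :: 'a mpol poly) \<in> Sring_t (q * p)" by (rule fgen_in_Sring_t[OF k q])
    then have F_S: "(fgen_of_var p q v :: 'a mpol poly) \<in> Sring_t (q * p)"
      by (simp add: fgen_of_var_def)
    have "fgen p q (v mod p) \<in> ?K" by (rule generator_in_gen_ideal) (use k in auto)
    then have F_K: "fgen_of_var p q v \<in> ?K" by (simp add: fgen_of_var_def K_zero)
    show "[:Var v :: 'a mpol:] \<in> Sring_t (q * p)
        \<and> [:Var v :: 'a mpol:] - fgen_of_var p q v \<in> Sring_t (q * p)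
        \<and> [:Var v:] - ([:Var v:] - fgen_of_var p q v) \<in> ?K"
      using Var Sring_t_diff[OF Var F_S] F_K by simp
  qed (simp add: Sring_t_const)
  then show ?thesis using x Phi by (simp add: I_ideal_def)
qed

lemma Phi_fgen_eq_0:
  assumes "k < p" "q \<ge> 1"
  defines "d \<equiv> fgen_degree q k"
  shows "(\<Sum>j\<le>d. [:0, 1:] ^ (d - j) * Phi p q (e (j * p + k))) = 0"
proof -
  have const_terms: "(\<Sum>j\<le>d. [:0, 1:] ^ (d - j) * [:e (j * p + k):]) = fgen p q k"
    unfolding fgen_eq_sum[OF assms(2)] d_def by (simp add: monom_altdef mult.commute)
  have corrections: "(\<Sum>j\<le>d. [:0, 1:] ^ (d - j) * fgen_of_var p q (j * p + k)) = fgen p q k"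
  proof -
    have fv: "fgen_of_var p q (j * p + k) = (if j = d then fgen p q k else 0)" if "j \<le> d" for j
      using fgen_var_index[OF assms(1,2) that[unfolded d_def]] assms(1)
      by (auto simp: fgen_of_var_def d_def)
    have "(\<Sum>j\<le>d. [:0, 1:] ^ (d - j) * fgen_of_var p q (j * p + k))
        = (\<Sum>j\<le>d. if j = d then fgen p q k else 0)"
      by (rule sum.cong) (auto simp: fv)
    then show ?thesis by simp
  qed
  have "(\<Sum>j\<le>d. [:0, 1:] ^ (d - j) * Phi p q (e (j * p + k)))
      = (\<Sum>j\<le>d. [:0, 1:] ^ (d - j) * [:e (j * p + k):])
        - (\<Sum>j\<le>d. [:0, 1:] ^ (d - j) * fgen_of_var p q (j * p + k))"
    by (simp add: Phi_e right_diff_distrib sum_subtractf)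
  then show ?thesis unfolding const_terms corrections by simp
qed

section \<open>The matrix A\<close>

lemma A_entry_column:
  assumes "p \<ge> 1" "q \<ge> 1" "c' < (q - 1) + (p - 1) * q"
  obtains i s where "i < p" "s + fgen_degree q i \<le> 2 * q - 2"
    "\<And>a. A_entry p q a c' = (if s \<le> a \<and> a \<le> s + fgen_degree q i then e ((a - s) * p + i) else 0)"
proof (cases "c' < q - 1")
  case True
  show ?thesis
    by (rule that[of 0 c']) (use True assms in \<open>auto simp: A_entry_def fgen_degree_def\<close>)
next
  case False
  define i where "i = (c' - (q - 1)) div q + 1"
  define s where "s = (c' - (q - 1)) mod q"
  have "c' - (q - 1) < (p - 1) * q" using assms(3) False by linarith
  then have "(c' - (q - 1)) div q < p - 1" by (rule less_mult_imp_div_less)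
  then have "i < p" unfolding i_def by linarith
  moreover have "s + fgen_degree q i \<le> 2 * q - 2"
  proof -
    have "s < q" using assms(2) by (simp add: s_def)
    then show ?thesis by (simp add: i_def fgen_degree_def)
  qed
  moreover have "A_entry p q a c' =
      (if s \<le> a \<and> a \<le> s + fgen_degree q i then e ((a - s) * p + i) else 0)" for a
    unfolding A_entry_def Let_def i_def[symmetric] s_def[symmetric]
    using False by (simp add: i_def fgen_degree_def le_diff_conv add.commute)
  ultimately show ?thesis by (rule that)
qed

lemma sum_window_shift:
  fixes s d n :: nat
  assumes "s + d < n"
  shows "(\<Sum>a<n. if s \<le> a \<and> a \<le> s + d then h a else 0) = (\<Sum>j\<le>d. h (s + j))"
proof -
  have "(\<Sum>a<n. if s \<le> a \<and> a \<le> s + d then h a else 0) = (\<Sum>a\<in>{s..s + d}. h a)"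
    using assms by (simp add: sum.inter_filter[symmetric]) (rule sum.cong; auto)
  also have "\<dots> = (\<Sum>j\<le>d. h (s + j))"
    by (simp add: sum.atLeastAtMost_shift_0 atLeast0AtMost)
  finally show ?thesis .
qed

text \<open>Row a of A carries the coefficient of t^(2q-2-a), as in a Sylvester matrix.\<close>

lemma Phi_A_column_relation:
  assumes "p \<ge> 1" "q \<ge> 1" "c' < (q - 1) + (p - 1) * q"
  shows "(\<Sum>a<2 * q - 1. [:0, 1:] ^ (2 * q - 2 - a) * Phi p q (A_entry p q a c')) = 0"
proof -
  let ?X = "[:0, 1:] :: 'a::comm_ring_1 mpol poly"
  obtain i s where i: "i < p" and s: "s + fgen_degree q i \<le> 2 * q - 2"
    and A: "\<And>a. (A_entry p q a c' :: 'a mpol) =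
      (if s \<le> a \<and> a \<le> s + fgen_degree q i then e ((a - s) * p + i) else 0)"
    using A_entry_column[OF assms] by blast
  define d where "d = fgen_degree q i"
  have "(\<Sum>a<2 * q - 1. ?X ^ (2 * q - 2 - a) * Phi p q (A_entry p q a c'))
      = (\<Sum>a<2 * q - 1. if s \<le> a \<and> a \<le> s + d then ?X ^ (2 * q - 2 - a) * Phi p q (e ((a - s) * p + i)) else 0)"
    by (intro sum.cong refl) (simp add: A d_def)
  also have "\<dots> = (\<Sum>j\<le>d. ?X ^ (2 * q - 2 - (s + j)) * Phi p q (e ((s + j - s) * p + i)))"
    by (rule sum_window_shift) (use s assms(2) in \<open>simp add: d_def\<close>)
  also have "\<dots> = ?X ^ (2 * q - 2 - s - d) * (\<Sum>j\<le>d. ?X ^ (d - j) * Phi p q (e (j * p + i)))"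
    unfolding sum_distrib_left
  proof (rule sum.cong)
    fix j assume "j \<in> {..d}"
    then have "2 * q - 2 - (s + j) = (2 * q - 2 - s - d) + (d - j)" using s by (auto simp: d_def)
    then show "?X ^ (2 * q - 2 - (s + j)) * Phi p q (e ((s + j - s) * p + i))
        = ?X ^ (2 * q - 2 - s - d) * (?X ^ (d - j) * Phi p q (e (j * p + i)))"
      by (simp add: power_add mult.assoc)
  qed simp
  also have "\<dots> = 0" by (simp add: Phi_fgen_eq_0[OF i assms(2)] d_def)
  finally show ?thesis .
qed

lemma pick_atLeastLessThan_0: "a < n \<Longrightarrow> pick {0..<n} a = a"
proof (induct a)
  case 0 then show ?case by (simp add: Least_eq_0)
next
  case (Suc a)
  then have "pick {0..<n} a = a" by simp
  then show ?case using Suc.prems by (auto intro!: Least_equality)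
qed

lemma max_minor_eq_det:
  fixes d :: "'a::comm_ring_1 mpol"
  assumes d: "d \<in> max_minors p q"
  obtains M c where "d = det M" "M \<in> carrier_mat (2 * q - 1) (2 * q - 1)"
    "\<And>j. j < 2 * q - 1 \<Longrightarrow> c j < (q - 1) + (p - 1) * q"
    "\<And>a j. a < 2 * q - 1 \<Longrightarrow> j < 2 * q - 1 \<Longrightarrow> M $$ (a, j) = A_entry p q a (c j)"
proof -
  let ?n = "2 * q - 1"
  let ?A = "A_mat p q :: 'a mpol mat"
  have "\<exists>C. d = det (submatrix ?A {0..<?n} C) \<and> C \<subseteq> {0..<(q - 1) + (p - 1) * q} \<and> card C = ?n"
    using d unfolding max_minors_def by (rule CollectD)
  then obtain C where d_eq: "d = det (submatrix ?A {0..<?n} C)"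
    and C: "C \<subseteq> {0..<(q - 1) + (p - 1) * q}" "card C = ?n"
    by (elim exE conjE) (rule that)
  have dims_A: "dim_row ?A = ?n" "dim_col ?A = (q - 1) + (p - 1) * q"
    by (simp_all add: A_mat_def)
  have rows: "{i. i < dim_row ?A \<and> i \<in> {0..<?n}} = {0..<?n}"
    and cols: "{j. j < dim_col ?A \<and> j \<in> C} = C"
    unfolding dims_A using C(1) by auto
  have column: "pick C j < (q - 1) + (p - 1) * q" if "j < ?n" for j
    using pick_in_set_le[of j C] that C by auto
  show ?thesis
  proof (rule that[OF d_eq _ column])
    show "submatrix ?A {0..<?n} C \<in> carrier_mat ?n ?n"
      by (rule carrier_matI) (simp_all only: dim_submatrix rows cols card_atLeastLessThan diff_zero C(2))
  next
    fix a j assume a: "a < ?n" and j: "j < ?n"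
    have "submatrix ?A {0..<?n} C $$ (a, j) = ?A $$ (pick {0..<?n} a, pick C j)"
      by (rule submatrix_index) (simp_all only: rows cols card_atLeastLessThan diff_zero a j C(2))
    also have "\<dots> = A_entry p q a (pick C j)"
      using a column[OF j] by (simp add: pick_atLeastLessThan_0 A_mat_def)
    finally show "submatrix ?A {0..<?n} C $$ (a, j) = A_entry p q a (pick C j)" .
  qed
qed

lemma Phi_max_minor_eq_0:
  fixes d :: "'a::idom mpol"
  assumes p: "p \<ge> 1" and q: "q \<ge> 1" and d: "d \<in> max_minors p q"
  shows "Phi p q d = 0"
proof -
  let ?n = "2 * q - 1"
  obtain M c where d_eq: "d = det M" and M: "M \<in> carrier_mat ?n ?n"
    and c: "\<And>j. j < ?n \<Longrightarrow> c j < (q - 1) + (p - 1) * q"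
    and M_entry: "\<And>a j. a < ?n \<Longrightarrow> j < ?n \<Longrightarrow> M $$ (a, j) = A_entry p q a (c j)"
    using max_minor_eq_det[OF d] by blast
  define N where "N = map_mat (Phi p q) M"
  have N: "N \<in> carrier_mat ?n ?n"
    unfolding N_def using M by (simp only: map_carrier_mat)
  let ?v = "vec ?n (\<lambda>a. [:0, 1:] ^ (?n - 1 - a)) :: 'a mpol poly vec"
  have last: "?n - 1 < ?n" using q by simp
  have "?v $ (?n - 1) = [:0, 1:] ^ (?n - 1 - (?n - 1))" by (simp only: index_vec[OF last])
  then have v_last: "?v $ (?n - 1) = 1" by simp
  have v_nonzero: "?v \<noteq> 0\<^sub>v ?n"
  proof
    assume v_zero: "?v = 0\<^sub>v ?n"
    have "1 = ?v $ (?n - 1)" using v_last by (rule sym)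
    also have "\<dots> = 0\<^sub>v ?n $ (?n - 1)" by (simp only: v_zero)
    also have "\<dots> = 0" using last by (rule index_zero_vec)
    finally show False by simp
  qed
  have kernel: "transpose_mat N *\<^sub>v ?v = 0\<^sub>v ?n"
  proof (rule eq_vecI)
    fix j assume "j < dim_vec (0\<^sub>v ?n :: 'a mpol poly vec)"
    then have j: "j < ?n" by simp
    have "(transpose_mat N *\<^sub>v ?v) $ j = (\<Sum>a\<in>{0..<?n}. col N j $ a * ?v $ a)"
      using j carrier_matD[OF N] by (simp add: scalar_prod_def)
    also have "\<dots> = (\<Sum>a\<in>{0..<?n}. Phi p q (A_entry p q a (c j)) * [:0, 1:] ^ (?n - 1 - a))"
    proof (rule sum.cong)
      fix a assume "a \<in> {0..<?n}"
      then have a: "a < ?n" by simp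
      have "col N j $ a = Phi p q (M $$ (a, j))"
        using a j carrier_matD[OF M] by (simp add: N_def)
      then show "col N j $ a * ?v $ a = Phi p q (A_entry p q a (c j)) * [:0, 1:] ^ (?n - 1 - a)"
        using a by (simp add: M_entry[OF a j])
    qed simp
    also have "\<dots> = (\<Sum>a<2 * q - 1. [:0, 1:] ^ (2 * q - 2 - a) * Phi p q (A_entry p q a (c j)))"
      by (simp add: atLeast0LessThan mult.commute)
    also have "\<dots> = 0" by (rule Phi_A_column_relation[OF p q c[OF j]])
    finally show "(transpose_mat N *\<^sub>v ?v) $ j = 0\<^sub>v ?n $ j" using j by simp
  qed (simp add: carrier_matD[OF N])
  have "transpose_mat N \<in> carrier_mat ?n ?n" using N by simp
  moreover have "?v \<in> carrier_vec ?n" by simp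
  ultimately have "det (transpose_mat N) = 0"
    using det_0_iff_vec_prod_zero v_nonzero kernel by blast
  then have "det N = 0" by (simp only: det_transpose[OF N])
  then show ?thesis
    unfolding d_eq comm_ring_hom.hom_det[OF comm_ring_hom_Phi, symmetric] N_def .
qed

lemma radical_J_ideal_subset_I_ideal:
  assumes "p \<ge> 1" "q \<ge> 1"
  shows "radical_in (Sring (q * p)) (J_ideal p q :: 'a::idom mpol set) \<subseteq> I_ideal p q"
proof
  fix x :: "'a mpol" assume "x \<in> radical_in (Sring (q * p)) (J_ideal p q)"
  then obtain m c where x: "x \<in> Sring (q * p)" and xm: "x ^ m = (\<Sum>d\<in>max_minors p q. c d * d)"
    unfolding radical_in_def J_ideal_def gen_ideal_def by blast
  interpret comm_ring_hom "Phi p q :: 'a mpol \<Rightarrow> _" by (rule comm_ring_hom_Phi)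
  have "Phi p q x ^ m = (\<Sum>d\<in>max_minors p q. Phi p q (c d) * Phi p q d)"
    by (simp add: xm flip: hom_power hom_mult hom_sum)
  also have "\<dots> = 0" by (rule sum.neutral) (use Phi_max_minor_eq_0[OF assms] in auto)
  finally have "Phi p q x = 0" by simp
  then show "x \<in> I_ideal p q" by (rule Phi_zero_imp_in_I_ideal[OF x _ assms])
qed

lemma subset_radical_in: "X \<subseteq> R \<Longrightarrow> X \<subseteq> radical_in R X"
  unfolding radical_in_def by (auto intro: exI[of _ 1])

text \<open>The inclusion of sqrt J in I holds over every field and for every p >= 1.\<close>

theorem proposition4p1:
  fixes p q :: nat
  assumes "p \<ge> 3" and "q \<ge> 1"
  shows "radical_in (Sring (q*p)) (J_ideal p q :: 'a::field mpol set)
           \<subseteq> radical_in (Sring (q*p)) (I_ideal p q)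
         \<and> (prime p \<and> card (UNIV :: 'a set) = p \<longrightarrow>
           radical_in (Sring (q*p)) (J_ideal p q :: 'a mpol set) \<subseteq> I_ideal p q)"
proof -
  have "radical_in (Sring (q*p)) (J_ideal p q :: 'a mpol set) \<subseteq> I_ideal p q"
    using assms by (intro radical_J_ideal_subset_I_ideal) simp_all
  moreover have "I_ideal p q \<subseteq> radical_in (Sring (q*p)) (I_ideal p q :: 'a mpol set)"
    by (rule subset_radical_in) (auto simp: I_ideal_def)
  ultimately show ?thesis by blast
qed

end
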